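(* Let $X$ be an exponential vector space over a field $K$ such that $Q(X)$ generates $X\smallsetminus X_0$. Then every maximal orderly independent subset of $Q(X)$ (i.e. every orderly independent $B\subseteq Q(X)$ not properly contained in any orderly independent subset of $Q(X)$) is a basis of $X\smallsetminus X_0$.
   Context: An exponential vector space (evs) over a field $K$ is a partially ordered set $(X,\leq)$ with a binary operation $+$ on $X$ and a map $K\times X\to X$, $(\alpha,x)\mapsto \alpha x$, such that: (A1) $(X,+)$ is a commutative semigroup with identity $\theta$; (A2) $x\leq y$ implies $x+z\leq y+z$ and $\alpha x\leq \alpha y$ for all $z\in X$, $\alpha\in K$; (A3) $\alpha(x+y)=\alpha x+\alpha y$, $\alpha(\beta x)=(\alpha\beta)x$, $(\alpha+\beta)x\leq \alpha x+\beta x$, $1x=x$; (A4) $\alpha x=\theta$ iff $\alpha=0$ or $x=\theta$; (A5) $x+(-1)x=\theta$ iff $x\in X_0$, where $X_0:=\{z\in X: y\not\leq z \text{ for all } y\in X\smallsetminus\{z\}\}$ (the set of minimal elements, called the primitive space; it is a vector space over $K$); (A6) for each $x\in X$ there is $p\in X_0$ with $p\leq x$. For $x\in X\smallsetminus X_0$ let $L(x):=\{z\in X: z\geq \alpha x+p \text{ for some } \alpha\in K\smallsetminus\{0\},\ p\in X_0\}$. A subset $B\subseteq X\smallsetminus X_0$ generates $X\smallsetminus X_0$ if $X\smallsetminus X_0=\bigcup_{b\in B}L(b)$. Elements $x,y\in X\smallsetminus X_0$ are orderly dependent if $x\in L(y)$ or $y\in L(x)$, and orderly independent otherwise; $B\subseteq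 X\smallsetminus X_0$ is orderly independent if any two distinct members of $B$ are orderly independent. A basis of $X\smallsetminus X_0$ is an orderly independent subset of $X\smallsetminus X_0$ that generates $X\smallsetminus X_0$. For $x\in X$ write $\downarrow x:=\{z\in X: z\leq x\}$. The feasible set is $Q(X):=\{x\in X\smallsetminus X_0: (\downarrow x\smallsetminus X_0)\subseteq L(x)\}$. *)

theory Defs
  imports Main
begin

text \<open>An exponential vector space over a field (the type 'k, i.e. K = UNIV::'k set),
  given by a carrier X, an order le, addition pl, scalar multiplication sm and identity th.\<close>

definition evs ::
  "'a set \<Rightarrow> ('a \<Rightarrow> 'a \<Rightarrow> bool) \<Rightarrow> ('a \<Rightarrow> 'a \<Rightarrow> 'a) \<Rightarrow> ('k::field \<Rightarrow> 'a \<Rightarrow> 'a) \<Rightarrow> 'a \<Rightarrow> bool"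
  where
  "evs X le pl sm th \<longleftrightarrow>
     \<comment> \<open>partial order on X\<close>
     (\<forall>x\<in>X. le x x) \<and>
     (\<forall>x\<in>X. \<forall>y\<in>X. le x y \<and> le y x \<longrightarrow> x = y) \<and>
     (\<forall>x\<in>X. \<forall>y\<in>X. \<forall>z\<in>X. le x y \<and> le y z \<longrightarrow> le x z) \<and>
     \<comment> \<open>closure\<close>
     (\<forall>x\<in>X. \<forall>y\<in>X. pl x y \<in> X) \<and>
     (\<forall>a. \<forall>x\<in>X. sm a x \<in> X) \<and>
     th \<in> X \<and>
     \<comment> \<open>(A1)\<close>
     (\<forall>x\<in>X. \<forall>y\<in>X. \<forall>z\<in>X. pl (pl x y) z = pl x (pl y z)) \<and>
     (\<forall>x\<in>X. \<forall>y\<in>X. pl x y = pl y x) \<and>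
     (\<forall>x\<in>X. pl x th = x) \<and>
     \<comment> \<open>(A2)\<close>
     (\<forall>x\<in>X. \<forall>y\<in>X. le x y \<longrightarrow> (\<forall>z\<in>X. le (pl x z) (pl y z)) \<and> (\<forall>a. le (sm a x) (sm a y))) \<and>
     \<comment> \<open>(A3)\<close>
     (\<forall>a. \<forall>x\<in>X. \<forall>y\<in>X. sm a (pl x y) = pl (sm a x) (sm a y)) \<and>
     (\<forall>a b. \<forall>x\<in>X. sm a (sm b x) = sm (a * b) x) \<and>
     (\<forall>a b. \<forall>x\<in>X. le (sm (a + b) x) (pl (sm a x) (sm b x))) \<and>
     (\<forall>x\<in>X. sm 1 x = x) \<and>
     \<comment> \<open>(A4)\<close>
     (\<forall>a. \<forall>x\<in>X. sm a x = th \<longleftrightarrow> a = 0 \<or> x = th) \<and>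
     \<comment> \<open>(A5)\<close>
     (\<forall>x\<in>X. pl x (sm (-1) x) = th \<longleftrightarrow>
        x \<in> {z\<in>X. \<forall>y\<in>X - {z}. \<not> le y z}) \<and>
     \<comment> \<open>(A6)\<close>
     (\<forall>x\<in>X. \<exists>p\<in>{z\<in>X. \<forall>y\<in>X - {z}. \<not> le y z}. le p x)"

definition prim :: "'a set \<Rightarrow> ('a \<Rightarrow> 'a \<Rightarrow> bool) \<Rightarrow> 'a set" where
  "prim X le = {z\<in>X. \<forall>y\<in>X - {z}. \<not> le y z}"

definition Lset ::
  "'a set \<Rightarrow> ('a \<Rightarrow> 'a \<Rightarrow> bool) \<Rightarrow> ('a \<Rightarrow> 'a \<Rightarrow> 'a) \<Rightarrow> ('k::field \<Rightarrow> 'a \<Rightarrow> 'a) \<Rightarrow> 'a \<Rightarrow> 'a set"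
  where
  "Lset X le pl sm x = {z\<in>X. \<exists>a p. a \<noteq> 0 \<and> p \<in> prim X le \<and> le (pl (sm a x) p) z}"

definition generates ::
  "'a set \<Rightarrow> ('a \<Rightarrow> 'a \<Rightarrow> bool) \<Rightarrow> ('a \<Rightarrow> 'a \<Rightarrow> 'a) \<Rightarrow> ('k::field \<Rightarrow> 'a \<Rightarrow> 'a) \<Rightarrow> 'a set \<Rightarrow> bool"
  where
  "generates X le pl sm B \<longleftrightarrow> B \<subseteq> X - prim X le \<and>
     X - prim X le = (\<Union>b\<in>B. Lset X le pl sm b)"

definition orderly_indep ::
  "'a set \<Rightarrow> ('a \<Rightarrow> 'a \<Rightarrow> bool) \<Rightarrow> ('a \<Rightarrow> 'a \<Rightarrow> 'a) \<Rightarrow> ('k::field \<Rightarrow> 'a \<Rightarrow> 'a) \<Rightarrow> 'a set \<Rightarrow> bool"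
  where
  "orderly_indep X le pl sm B \<longleftrightarrow> B \<subseteq> X - prim X le \<and>
     (\<forall>x\<in>B. \<forall>y\<in>B. x \<noteq> y \<longrightarrow> x \<notin> Lset X le pl sm y \<and> y \<notin> Lset X le pl sm x)"

definition is_basis ::
  "'a set \<Rightarrow> ('a \<Rightarrow> 'a \<Rightarrow> bool) \<Rightarrow> ('a \<Rightarrow> 'a \<Rightarrow> 'a) \<Rightarrow> ('k::field \<Rightarrow> 'a \<Rightarrow> 'a) \<Rightarrow> 'a set \<Rightarrow> bool"
  where
  "is_basis X le pl sm B \<longleftrightarrow> orderly_indep X le pl sm B \<and> generates X le pl sm B"

definition feasible ::
  "'a set \<Rightarrow> ('a \<Rightarrow> 'a \<Rightarrow> bool) \<Rightarrow> ('a \<Rightarrow> 'a \<Rightarrow> 'a) \<Rightarrow> ('k::field \<Rightarrow> 'a \<Rightarrow> 'a) \<Rightarrow> 'a set"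
  where
  "feasible X le pl sm = {x\<in>X - prim X le.
     {z\<in>X. le z x} - prim X le \<subseteq> Lset X le pl sm x}"

end

theory Submission
  imports Defs
begin

text \<open>The primitive elements form a subspace, so every L(b) is upward closed and stable under
  the affine maps z \<mapsto> \<alpha>z + p with \<alpha> \<noteq> 0 and p primitive. Hence x \<in> L(q) and q \<in> L(b)
  give x \<in> L(b). For feasible b, b \<in> L(q) forces q \<in> L(b): if \<alpha>q + p \<le> b, then \<alpha>q + p is
  non-primitive and below b, so it lies in L(b), and then so does
  q = (\<alpha>q + p)/\<alpha> - p/\<alpha>. Thus maximality of B puts every feasible element into some
  L(b) with b \<in> B, and since the feasible elements generate, so does B.\<close>

locale exp_vector_space =
  fixes X :: "'a set" and le :: "'a \<Rightarrow> 'a \<Rightarrow> bool" and pl :: "'a \<Rightarrow> 'a \<Rightarrow> 'a"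
    and sm :: "'k::field \<Rightarrow> 'a \<Rightarrow> 'a" and th :: 'a
  assumes evs: "evs X le pl sm th"
begin

abbreviation "X\<^sub>0 \<equiv> prim X le"
abbreviation "L \<equiv> Lset X le pl sm"
abbreviation "Q \<equiv> feasible X le pl sm"

(* Folding the comprehension back into prim keeps the primitive-space axioms opaque to metis. *)
lemmas evs_axioms = evs[unfolded evs_def prim_def[symmetric]]

lemma ord_refl: "x \<in> X \<Longrightarrow> le x x"
  using evs_axioms by metis

lemma ord_trans: "\<lbrakk>x \<in> X; y \<in> X; z \<in> X; le x y; le y z\<rbrakk> \<Longrightarrow> le x z"
  using evs_axioms by metis

lemma pl_closed: "\<lbrakk>x \<in> X; y \<in> X\<rbrakk> \<Longrightarrow> pl x y \<in> X"
  using evs_axioms by metis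

lemma sm_closed: "x \<in> X \<Longrightarrow> sm a x \<in> X"
  using evs_axioms by metis

lemma th_closed: "th \<in> X"
  using evs_axioms by metis

lemma pl_assoc: "\<lbrakk>x \<in> X; y \<in> X; z \<in> X\<rbrakk> \<Longrightarrow> pl (pl x y) z = pl x (pl y z)"
  using evs_axioms by metis

lemma pl_commute: "\<lbrakk>x \<in> X; y \<in> X\<rbrakk> \<Longrightarrow> pl x y = pl y x"
  using evs_axioms by metis

lemma pl_th: "x \<in> X \<Longrightarrow> pl x th = x"
  using evs_axioms by metis

lemma pl_mono: "\<lbrakk>x \<in> X; y \<in> X; z \<in> X; le x y\<rbrakk> \<Longrightarrow> le (pl x z) (pl y z)"
  using evs_axioms by metis

lemma sm_mono: "\<lbrakk>x \<in> X; y \<in> X; le x y\<rbrakk> \<Longrightarrow> le (sm a x) (sm a y)"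
  using evs_axioms by metis

lemma sm_pl_distrib: "\<lbrakk>x \<in> X; y \<in> X\<rbrakk> \<Longrightarrow> sm a (pl x y) = pl (sm a x) (sm a y)"
  using evs_axioms by metis

lemma sm_sm: "x \<in> X \<Longrightarrow> sm a (sm b x) = sm (a * b) x"
  using evs_axioms by metis

lemma sm_one: "x \<in> X \<Longrightarrow> sm 1 x = x"
  using evs_axioms by metis

lemma sm_eq_th_iff: "x \<in> X \<Longrightarrow> sm a x = th \<longleftrightarrow> a = 0 \<or> x = th"
  using evs_axioms by metis

lemma prim_iff_pl_neg_eq_th: "x \<in> X \<Longrightarrow> x \<in> X\<^sub>0 \<longleftrightarrow> pl x (sm (-1) x) = th"
  using evs_axioms by metis

lemma prim_closed: "p \<in> X\<^sub>0 \<Longrightarrow> p \<in> X"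
  unfolding prim_def by blast

lemma prim_minimal: "\<lbrakk>p \<in> X\<^sub>0; y \<in> X; le y p\<rbrakk> \<Longrightarrow> y = p"
  unfolding prim_def by blast

lemma th_prim: "th \<in> X\<^sub>0"
proof -
  have "sm (-1) th = th"
    using sm_eq_th_iff th_closed by blast
  then show ?thesis
    by (simp add: prim_iff_pl_neg_eq_th pl_th th_closed)
qed

lemma sm_prim: "p \<in> X\<^sub>0 \<Longrightarrow> sm a p \<in> X\<^sub>0"
proof -
  assume p_prim: "p \<in> X\<^sub>0"
  then have p: "p \<in> X" by (rule prim_closed)
  have "pl p (sm (-1) p) = th"
    using p p_prim prim_iff_pl_neg_eq_th by blast
  then have "sm a (pl p (sm (-1) p)) = th"
    using sm_eq_th_iff th_closed by blast
  then have "pl (sm a p) (sm (-1) (sm a p)) = th"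
    using p by (simp add: sm_pl_distrib sm_closed sm_sm)
  then show ?thesis
    using p sm_closed prim_iff_pl_neg_eq_th by blast
qed

lemma pl_prim: "\<lbrakk>p \<in> X\<^sub>0; q \<in> X\<^sub>0\<rbrakk> \<Longrightarrow> pl p q \<in> X\<^sub>0"
proof -
  assume p_prim: "p \<in> X\<^sub>0" and q_prim: "q \<in> X\<^sub>0"
  then have p: "p \<in> X" and q: "q \<in> X" by (auto intro: prim_closed)
  define p' q' where "p' = sm (-1) p" and "q' = sm (-1) q"
  have p': "p' \<in> X" and q': "q' \<in> X"
    unfolding p'_def q'_def using p q by (auto intro: sm_closed)
  have "pl (pl p q) (sm (-1) (pl p q)) = pl p (pl q (pl p' q'))"
    unfolding p'_def q'_def using p q by (simp add: sm_pl_distrib pl_assoc sm_closed pl_closed)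
  also have "\<dots> = pl (pl p p') (pl q q')"
    using p q p' q' by (metis pl_assoc pl_commute pl_closed)
  also have "\<dots> = th"
    unfolding p'_def q'_def using p q p_prim q_prim th_closed
    by (simp add: prim_iff_pl_neg_eq_th pl_th)
  finally show ?thesis
    using p q pl_closed prim_iff_pl_neg_eq_th by blast
qed

lemma affine_cancel:
  assumes "a \<noteq> 0" "p \<in> X\<^sub>0" "q \<in> X"
  shows "pl (sm (inverse a) (pl (sm a q) p)) (sm (- inverse a) p) = q"
proof -
  have p: "p \<in> X" using assms(2) by (rule prim_closed)
  have "sm (inverse a) (pl (sm a q) p) = pl q (sm (inverse a) p)"
    using assms p by (simp add: sm_pl_distrib sm_closed sm_sm sm_one)
  moreover have "pl (sm (inverse a) p) (sm (- inverse a) p) = th"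
    using sm_prim[OF assms(2)] p prim_iff_pl_neg_eq_th sm_closed sm_sm
    by (metis mult_minus1)
  ultimately show ?thesis
    using assms p by (simp add: pl_assoc sm_closed pl_th)
qed

lemma prim_if_affine_prim:
  assumes "a \<noteq> 0" "p \<in> X\<^sub>0" "q \<in> X" "pl (sm a q) p \<in> X\<^sub>0"
  shows "q \<in> X\<^sub>0"
  using affine_cancel[OF assms(1-3)] sm_prim pl_prim assms(2,4) by metis

lemma LsetI: "\<lbrakk>z \<in> X; a \<noteq> 0; p \<in> X\<^sub>0; le (pl (sm a x) p) z\<rbrakk> \<Longrightarrow> z \<in> L x"
  unfolding Lset_def by blast

lemma LsetE:
  assumes "z \<in> L x"
  obtains a p where "z \<in> X" "a \<noteq> 0" "p \<in> X\<^sub>0" "le (pl (sm a x) p) z"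
  using assms unfolding Lset_def by blast

lemma Lset_self: "x \<in> X \<Longrightarrow> x \<in> L x"
  by (rule LsetI[where a = 1 and p = th]) (simp_all add: th_prim sm_one pl_th ord_refl)

lemma Lset_upward: "\<lbrakk>z \<in> L b; b \<in> X; w \<in> X; le z w\<rbrakk> \<Longrightarrow> w \<in> L b"
  by (elim LsetE, rule LsetI) (auto intro: ord_trans pl_closed sm_closed prim_closed)

lemma Lset_affine:
  assumes "z \<in> L b" "b \<in> X" "a \<noteq> 0" "p \<in> X\<^sub>0"
  shows "pl (sm a z) p \<in> L b"
proof -
  obtain c p' where z: "z \<in> X" and "c \<noteq> 0" and p': "p' \<in> X\<^sub>0"
    and le_z: "le (pl (sm c b) p') z"
    using assms(1) by (rule LsetE)
  have p: "p \<in> X" "p' \<in> X" using assms(4) p' by (auto intro: prim_closed)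
  have cb: "pl (sm c b) p' \<in> X" using assms(2) p by (intro pl_closed sm_closed)
  have "le (pl (sm a (pl (sm c b) p')) p) (pl (sm a z) p)"
    using cb z p le_z by (intro pl_mono sm_mono sm_closed)
  moreover have "pl (sm a (pl (sm c b) p')) p = pl (sm (a * c) b) (pl (sm a p') p)"
    using assms(2) p by (simp add: sm_pl_distrib sm_sm pl_assoc sm_closed)
  ultimately show ?thesis
    using \<open>c \<noteq> 0\<close> assms p' z p
    by (intro LsetI[where a = "a * c"]) (auto intro: pl_prim sm_prim pl_closed sm_closed)
qed

lemma Lset_trans: "\<lbrakk>x \<in> L q; q \<in> L b; b \<in> X\<rbrakk> \<Longrightarrow> x \<in> L b"
  by (erule LsetE) (blast intro: Lset_upward Lset_affine)

lemma Lset_nonprim: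
  assumes "x \<in> L b" "b \<in> X - X\<^sub>0"
  shows "x \<in> X - X\<^sub>0"
proof -
  obtain a p where x: "x \<in> X" and a: "a \<noteq> 0" and p: "p \<in> X\<^sub>0"
    and le_x: "le (pl (sm a b) p) x"
    using assms(1) by (rule LsetE)
  have "x \<notin> X\<^sub>0"
  proof
    assume "x \<in> X\<^sub>0"
    moreover have "pl (sm a b) p \<in> X"
      using assms(2) p by (auto intro: pl_closed sm_closed prim_closed)
    ultimately have "pl (sm a b) p \<in> X\<^sub>0"
      using le_x prim_minimal by metis
    then show False
      using prim_if_affine_prim a p assms(2) by blast
  qed
  with x show ?thesis by blast
qed

lemma feasible_Lset_sym:
  assumes "b \<in> Q" "q \<in> X - X\<^sub>0" "b \<in> L q"
  shows "q \<in> L b"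
proof -
  have b: "b \<in> X" using assms(1) unfolding feasible_def by blast
  obtain a p where a: "a \<noteq> 0" and p: "p \<in> X\<^sub>0" and le_b: "le (pl (sm a q) p) b"
    using assms(3) by (rule LsetE)
  define y where "y = pl (sm a q) p"
  have y: "y \<in> X - X\<^sub>0"
    unfolding y_def using assms(2) a p prim_if_affine_prim
    by (auto intro: pl_closed sm_closed prim_closed)
  then have "y \<in> L b"
    using assms(1) le_b unfolding feasible_def y_def by blast
  then have "pl (sm (inverse a) y) (sm (- inverse a) p) \<in> L b"
    using b a p by (intro Lset_affine sm_prim) simp_all
  then show ?thesis
    unfolding y_def using affine_cancel a p assms(2) by simp
qed

lemma maximal_orderly_indep_covers_feasible:
  assumes "B \<subseteq> Q" "orderly_indep X le pl sm B"
    and "\<forall>C. B \<subseteq> C \<and> C \<subseteq> Q \<and> orderly_indep X le pl sm C \<longrightarrow> C = B"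
    and "q \<in> Q"
  shows "\<exists>b\<in>B. q \<in> L b"
proof (cases "q \<in> B")
  case True
  then show ?thesis
    using assms(4) Lset_self unfolding feasible_def by blast
next
  case False
  have Q: "Q \<subseteq> X - X\<^sub>0" unfolding feasible_def by blast
  have "\<not> orderly_indep X le pl sm (insert q B)"
    using assms(1,3,4) False by blast
  then obtain b where "b \<in> B" "q \<in> L b \<or> b \<in> L q"
    using assms(1,2,4) Q unfolding orderly_indep_def by blast
  then show ?thesis
    using feasible_Lset_sym assms(1,4) Q by blast
qed

lemma generates_if_covers_generators:
  assumes "generates X le pl sm F" "B \<subseteq> X - X\<^sub>0" "\<forall>q\<in>F. \<exists>b\<in>B. q \<in> L b"
  shows "generates X le pl sm B"
  unfolding generates_def
proof (intro conjI equalityI subsetI)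
  fix x assume "x \<in> X - X\<^sub>0"
  then obtain q b where "x \<in> L q" "q \<in> L b" "b \<in> B"
    using assms(1,3) unfolding generates_def by blast
  then show "x \<in> (\<Union>b\<in>B. L b)"
    using Lset_trans assms(2) by blast
next
  fix x assume "x \<in> (\<Union>b\<in>B. L b)"
  then show "x \<in> X - X\<^sub>0"
    using Lset_nonprim assms(2) by blast
qed (use assms(2) in blast)

end

theorem mainTheorem7:
  fixes X :: "'a set" and le :: "'a \<Rightarrow> 'a \<Rightarrow> bool" and pl :: "'a \<Rightarrow> 'a \<Rightarrow> 'a"
    and sm :: "'k::field \<Rightarrow> 'a \<Rightarrow> 'a" and th :: 'a and B :: "'a set"
  assumes "evs X le pl sm th"
    and "generates X le pl sm (feasible X le pl sm)"
    and "B \<subseteq> feasible X le pl sm"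
    and "orderly_indep X le pl sm B"
    and "\<forall>C. B \<subseteq> C \<and> C \<subseteq> feasible X le pl sm \<and> orderly_indep X le pl sm C \<longrightarrow> C = B"
  shows "is_basis X le pl sm B"
proof -
  interpret exp_vector_space X le pl sm th
    using assms(1) by unfold_locales
  have "\<forall>q\<in>Q. \<exists>b\<in>B. q \<in> L b"
    using maximal_orderly_indep_covers_feasible assms(3-5) by blast
  moreover have "B \<subseteq> X - X\<^sub>0"
    using assms(4) unfolding orderly_indep_def by blast
  ultimately have "generates X le pl sm B"
    using generates_if_covers_generators assms(2) by blast
  with assms(4) show ?thesis
    unfolding is_basis_def by blast
qed

end
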